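(* Let $\mathbb{G}$ be an $E$-group, $\alpha\subseteq E$ and $n\ge1$. Suppose $\mathbb{G}[\alpha]$ is compatible with every free amalgamation chain of length $m$, $1\le m\le n$, whose constituents are $\mathrm{Cay}(\mathbb{G}[\alpha_i])$ with $\alpha_i\subsetneq\alpha$; that is, for every such chain $\mathbb{A}$ and every $w\in\alpha^*$ with $[w]_{\mathbb{G}}=1$, $\pi_w$ is the identity on the vertex set of $\mathbb{A}$. Then $\mathbb{G}[\alpha]$ is $N$-acyclic for $N=n+2$.
   Context: Let $E$ be a finite set. An $E$-group is a group $\mathbb{G}$ together with an inclusion $E\subseteq\mathbb{G}$ such that $E$ generates $\mathbb{G}$ and every $e\in E$ satisfies $e\neq1$, $e^2=1$. For $w=e_1\cdots e_n\in E^*$, $[w]_{\mathbb{G}}=e_1\cdots e_n$; for $\alpha\subseteq E$, $\mathbb{G}[\alpha]$ is the subgroup generated by $\alpha$. An $E$-graph is $\mathbb{H}=(V,(R_e)_{e\in E})$ with each $R_e$ symmetric and each vertex having at most one $R_e$-neighbour; $\pi_e$ is the permutation of $V$ swapping each vertex with its $R_e$-neighbour if any and fixing it otherwise, and $\pi_{e_1\cdots e_n}=\pi_{e_n}\circ\cdots\circ\pi_{e_1}$. Free amalgamation chain: given $m\ge1$, sets $\alpha_1,\dots,\alpha_m\subsetneq\alpha$, and elements $g_i\in\mathbb{G}[\alpha_i]$ for $1\le i<m$ such that for every $1<i<m$ the sets $\mathbb{G}[\alpha_{i-1}\cap\alpha_i]$ and $g_i\mathbb{G}[\alpha_i\cap\alpha_{i+1}]$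 are disjoint, the chain $\mathbb{A}=\bigoplus_{i=1}^m(\mathrm{Cay}(\mathbb{G}[\alpha_i]),g_i)$ is the $E$-graph whose vertex set is the quotient of $\bigcup_{i=1}^m\mathbb{G}[\alpha_i]\times\{i\}$ by the equivalence relation generated by $(g_ih,i)\approx(h,i+1)$ for $1\le i<m$ and $h\in\mathbb{G}[\alpha_i\cap\alpha_{i+1}]$, and whose $R_e$ is the image of $\bigcup_{i: e\in\alpha_i}\{((g,i),(ge,i)):g\in\mathbb{G}[\alpha_i]\}$; its length is $m$. A coset cycle of length $k\ge2$ in the $\alpha$-group $\mathbb{G}[\alpha]$ is a cyclically indexed family $(g_i,\beta_i)_{i\in\mathbb{Z}_k}$ with $g_i\in\mathbb{G}[\alpha]$, $\beta_i\subseteq\alpha$, such that $g_{i+1}\in g_i\mathbb{G}[\beta_i]$ and $g_i\mathbb{G}[\beta_i\cap\beta_{i-1}]\cap g_{i+1}\mathbb{G}[\beta_i\cap\beta_{i+1}]=\emptyset$ for all $i$; $N$-acyclic means no coset cycles of length $k$ with $2\le k\le N$. *)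

theory Defs
  imports "HOL-Algebra.Algebra"
begin

definition E_group :: "('a, 'b) monoid_scheme \<Rightarrow> 'a set \<Rightarrow> bool" where
  "E_group G E \<longleftrightarrow> group G \<and> finite E \<and> E \<subseteq> carrier G \<and> generate G E = carrier G
     \<and> (\<forall>e\<in>E. e \<noteq> \<one>\<^bsub>G\<^esub> \<and> e \<otimes>\<^bsub>G\<^esub> e = \<one>\<^bsub>G\<^esub>)"

definition word_eval :: "('a, 'b) monoid_scheme \<Rightarrow> 'a list \<Rightarrow> 'a" where
  "word_eval G w = foldr (\<lambda>e acc. e \<otimes>\<^bsub>G\<^esub> acc) w \<one>\<^bsub>G\<^esub>"

text \<open>Indices run over 1..m; the constituents are Cay(G[as i]), the gluing elements gs i.\<close>
definition free_chain ::
  "('a, 'b) monoid_scheme \<Rightarrow> 'a set \<Rightarrow> nat \<Rightarrow> (nat \<Rightarrow> 'a set) \<Rightarrow> (nat \<Rightarrow> 'a) \<Rightarrow> bool" where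
  "free_chain G \<alpha> m as gs \<longleftrightarrow> 1 \<le> m
     \<and> (\<forall>i. 1 \<le> i \<and> i \<le> m \<longrightarrow> as i \<subset> \<alpha>)
     \<and> (\<forall>i. 1 \<le> i \<and> i < m \<longrightarrow> gs i \<in> generate G (as i))
     \<and> (\<forall>i. 1 < i \<and> i < m \<longrightarrow>
          generate G (as (i - 1) \<inter> as i) \<inter> (gs i <#\<^bsub>G\<^esub> generate G (as i \<inter> as (i + 1))) = {})"

definition chain_base :: "('a, 'b) monoid_scheme \<Rightarrow> nat \<Rightarrow> (nat \<Rightarrow> 'a set) \<Rightarrow> ('a \<times> nat) set" where
  "chain_base G m as = {(g, i). 1 \<le> i \<and> i \<le> m \<and> g \<in> generate G (as i)}"

definition chain_gen ::
  "('a, 'b) monoid_scheme \<Rightarrow> nat \<Rightarrow> (nat \<Rightarrow> 'a set) \<Rightarrow> (nat \<Rightarrow> 'a) \<Rightarrow> (('a \<times> nat) \<times> ('a \<times> nat)) set" where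
  "chain_gen G m as gs = {((gs i \<otimes>\<^bsub>G\<^esub> h, i), (h, i + 1)) | i h.
       1 \<le> i \<and> i < m \<and> h \<in> generate G (as i \<inter> as (i + 1))}"

definition chain_equiv ::
  "('a, 'b) monoid_scheme \<Rightarrow> nat \<Rightarrow> (nat \<Rightarrow> 'a set) \<Rightarrow> (nat \<Rightarrow> 'a) \<Rightarrow> (('a \<times> nat) \<times> ('a \<times> nat)) set" where
  "chain_equiv G m as gs =
     ((chain_gen G m as gs \<union> (chain_gen G m as gs)\<inverse>)\<^sup>* \<inter> (chain_base G m as \<times> chain_base G m as))"

definition chain_vertices ::
  "('a, 'b) monoid_scheme \<Rightarrow> nat \<Rightarrow> (nat \<Rightarrow> 'a set) \<Rightarrow> (nat \<Rightarrow> 'a) \<Rightarrow> ('a \<times> nat) set set" where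
  "chain_vertices G m as gs = chain_base G m as // chain_equiv G m as gs"

definition chain_edges ::
  "('a, 'b) monoid_scheme \<Rightarrow> nat \<Rightarrow> (nat \<Rightarrow> 'a set) \<Rightarrow> (nat \<Rightarrow> 'a) \<Rightarrow> 'a
     \<Rightarrow> (('a \<times> nat) set \<times> ('a \<times> nat) set) set" where
  "chain_edges G m as gs e = {(U, W) | U W. U \<in> chain_vertices G m as gs \<and> W \<in> chain_vertices G m as gs \<and>
       (\<exists>i g. 1 \<le> i \<and> i \<le> m \<and> e \<in> as i \<and> g \<in> generate G (as i) \<and>
              (g, i) \<in> U \<and> (g \<otimes>\<^bsub>G\<^esub> e, i) \<in> W)}"

definition graph_pi :: "('v \<times> 'v) set \<Rightarrow> 'v \<Rightarrow> 'v" where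
  "graph_pi R x = (if \<exists>!y. (x, y) \<in> R then THE y. (x, y) \<in> R else x)"

definition graph_pi_word :: "('e \<Rightarrow> ('v \<times> 'v) set) \<Rightarrow> 'e list \<Rightarrow> 'v \<Rightarrow> 'v" where
  "graph_pi_word R w = fold (\<lambda>e. graph_pi (R e)) w"

definition coset_cycle ::
  "('a, 'b) monoid_scheme \<Rightarrow> 'a set \<Rightarrow> nat \<Rightarrow> (nat \<Rightarrow> 'a) \<Rightarrow> (nat \<Rightarrow> 'a set) \<Rightarrow> bool" where
  "coset_cycle G \<alpha> k g \<beta> \<longleftrightarrow> 2 \<le> k \<and>
     (\<forall>i<k. g i \<in> generate G \<alpha> \<and> \<beta> i \<subseteq> \<alpha>
        \<and> g ((i + 1) mod k) \<in> g i <#\<^bsub>G\<^esub> generate G (\<beta> i)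
        \<and> (g i <#\<^bsub>G\<^esub> generate G (\<beta> i \<inter> \<beta> ((i + k - 1) mod k)))
          \<inter> (g ((i + 1) mod k) <#\<^bsub>G\<^esub> generate G (\<beta> i \<inter> \<beta> ((i + 1) mod k))) = {})"

definition N_acyclic :: "('a, 'b) monoid_scheme \<Rightarrow> 'a set \<Rightarrow> nat \<Rightarrow> bool" where
  "N_acyclic G \<alpha> N \<longleftrightarrow> \<not> (\<exists>k g \<beta>. 2 \<le> k \<and> k \<le> N \<and> coset_cycle G \<alpha> k g \<beta>)"

end

theory Submission
  imports Defs
begin

(* A coset cycle (g_i, beta_i) of length k <= n + 2 gives elements h_i = g_i^-1 g_(i+1) in G[beta_i]
   with h_1 ... h_(k-1) h_0 = 1. Gluing Cay(G[beta_1]), ..., Cay(G[beta_m]) along h_1, ..., h_(m-1),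
   where m = max 1 (k - 2) <= n, yields a free amalgamation chain: freeness, and properness of the
   beta_i, are instances of the disjointness conditions of the cycle. Spelling every h_i as a word
   u_i over beta_i, the word u_1 ... u_(k-1) u_0 evaluates to 1 but moves the vertex [1]_1: the
   prefix u_1 ... u_m walks along the chain to [h_m]_m, the remaining letters of u_1 ... u_(k-1) keep
   the walk among the vertices [x]_m with x in h_m G[beta_m & beta_(m+1)], whereas u_0 reaches [1]_1
   only from vertices [x]_1 with x in G[beta_1 & beta_0]. The disjointness conditions at the two
   ends of the chain keep these two sets of vertices apart. *)

lemma graph_pi_eqI:
  assumes "(x, y) \<in> R" and "\<And>z. (x, z) \<in> R \<Longrightarrow> z = y"
  shows "graph_pi R x = y"
proof -
  have "\<exists>!y. (x, y) \<in> R" using assms by blast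
  moreover have "(THE y. (x, y) \<in> R) = y" using assms by (rule the_equality)
  ultimately show ?thesis by (simp add: graph_pi_def)
qed

lemma graph_pi_isolated: "(\<And>y. (x, y) \<notin> R) \<Longrightarrow> graph_pi R x = x"
  by (auto simp: graph_pi_def)

lemma graph_pi_word_Nil [simp]: "graph_pi_word R [] v = v"
  by (simp add: graph_pi_word_def)

lemma graph_pi_word_Cons [simp]: "graph_pi_word R (e # w) v = graph_pi_word R w (graph_pi (R e) v)"
  by (simp add: graph_pi_word_def)

lemma graph_pi_word_append: "graph_pi_word R (a @ b) v = graph_pi_word R b (graph_pi_word R a v)"
  by (simp add: graph_pi_word_def)

lemma graph_pi_word_preserves:
  assumes "\<And>e v. e \<in> B \<Longrightarrow> v \<in> S \<Longrightarrow> graph_pi (R e) v \<in> S"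
    and "set w \<subseteq> B" and "v \<in> S"
  shows "graph_pi_word R w v \<in> S"
  using assms(2,3) by (induction w arbitrary: v) (auto intro: assms(1))

context group
begin

lemma word_eval_Nil [simp]: "word_eval G [] = \<one>"
  by (simp add: word_eval_def)

lemma word_eval_Cons [simp]: "word_eval G (a # w) = a \<otimes> word_eval G w"
  by (simp add: word_eval_def)

lemma word_eval_closed: "set w \<subseteq> carrier G \<Longrightarrow> word_eval G w \<in> carrier G"
  by (induction w) auto

lemma word_eval_append:
  "set a \<subseteq> carrier G \<Longrightarrow> set b \<subseteq> carrier G \<Longrightarrow>
   word_eval G (a @ b) = word_eval G a \<otimes> word_eval G b"
  by (induction a) (auto simp: m_assoc word_eval_closed)

lemma word_eval_append_rev:
  assumes "set w \<subseteq> carrier G" and "\<And>e. e \<in> set w \<Longrightarrow> e \<otimes> e = \<one>"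
  shows "word_eval G (w @ rev w) = \<one>"
  using assms
proof (induction w)
  case (Cons a w)
  then have "word_eval G ((w @ rev w) @ [a]) = a"
    by (subst word_eval_append) auto
  then show ?case using Cons.prems by simp
qed simp

lemma word_eval_concat_telescope:
  assumes "a \<le> b" and "\<And>i. f i \<in> carrier G"
    and "\<And>i. a \<le> i \<Longrightarrow> i < b \<Longrightarrow> set (u i) \<subseteq> carrier G \<and> word_eval G (u i) = inv (f i) \<otimes> f (Suc i)"
  shows "word_eval G (concat (map u [a..<b])) = inv (f a) \<otimes> f b"
  using assms(1)
proof (induction b rule: dec_induct)
  case base
  then show ?case using assms(2) by simp
next
  case (step j)
  have "\<forall>i\<in>{a..<j}. set (u i) \<subseteq> carrier G" using assms(3) step.hyps by simp
  then have "set (concat (map u [a..<j])) \<subseteq> carrier G" by auto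
  then have "word_eval G (concat (map u [a..<Suc j]))
      = inv (f a) \<otimes> f j \<otimes> (inv (f j) \<otimes> f (Suc j))"
    using step assms(3) by (simp add: word_eval_append)
  also have "\<dots> = inv (f a) \<otimes> f (Suc j)"
    using assms(2) by (simp add: m_assoc[symmetric]) (simp add: m_assoc)
  finally show ?case .
qed

lemma generate_involutions_word:
  assumes "A \<subseteq> carrier G" and "\<And>e. e \<in> A \<Longrightarrow> e \<otimes> e = \<one>" and "x \<in> generate G A"
  shows "\<exists>w. set w \<subseteq> A \<and> word_eval G w = x"
  using assms(3)
proof (induction rule: generate.induct)
  case one
  show ?case by (intro exI[of _ "[]"]) simp
next
  case (incl h)
  then show ?case using assms(1) by (intro exI[of _ "[h]"]) auto
next
  case (inv h)
  then have "inv h = h" using assms by (metis inv_equality subsetD)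
  then show ?case using inv assms(1) by (intro exI[of _ "[h]"]) auto
next
  case (eng h1 h2)
  then obtain w1 w2 where "set w1 \<subseteq> A" "word_eval G w1 = h1" "set w2 \<subseteq> A" "word_eval G w2 = h2"
    by blast
  then show ?case using assms(1) by (intro exI[of _ "w1 @ w2"]) (auto simp: word_eval_append)
qed

lemma mem_l_coset_iff: "x \<in> a <# H \<longleftrightarrow> (\<exists>h\<in>H. x = a \<otimes> h)"
  by (auto simp: l_coset_def)

lemma generate_mult_incl: "y \<in> generate G A \<Longrightarrow> e \<in> A \<Longrightarrow> y \<otimes> e \<in> generate G A"
  by (rule generate.eng[OF _ generate.incl])

end

definition chain_class ::
  "('a, 'b) monoid_scheme \<Rightarrow> nat \<Rightarrow> (nat \<Rightarrow> 'a set) \<Rightarrow> (nat \<Rightarrow> 'a) \<Rightarrow> 'a \<Rightarrow> nat \<Rightarrow> ('a \<times> nat) set"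
  where "chain_class G m as gs x i = chain_equiv G m as gs `` {(x, i)}"

locale amalgamation_chain = group G for G (structure) +
  fixes m :: nat and as :: "nat \<Rightarrow> 'a set" and gs :: "nat \<Rightarrow> 'a"
  assumes constituent_carrier: "as i \<subseteq> carrier G"
    and gluing_mem: "1 \<le> i \<Longrightarrow> i < m \<Longrightarrow> gs i \<in> generate G (as i)"
    and gluing_free: "1 < i \<Longrightarrow> i < m \<Longrightarrow>
          generate G (as (i - 1) \<inter> as i) \<inter> (gs i <# generate G (as i \<inter> as (i + 1))) = {}"
begin

abbreviation cls :: "'a \<Rightarrow> nat \<Rightarrow> ('a \<times> nat) set"
  where "cls x i \<equiv> chain_class G m as gs x i"

lemma constituent_generate_carrier: "x \<in> generate G (as i \<inter> B) \<Longrightarrow> x \<in> carrier G"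
  using constituent_carrier generate_in_carrier by (meson le_infI1)

lemma constituent_generate_mono: "x \<in> generate G (as i \<inter> B) \<Longrightarrow> x \<in> generate G (as i)"
  using mono_generate[of "as i \<inter> B" "as i"] by blast

lemma mem_chain_gen_iff:
  "((x, i), (y, j)) \<in> chain_gen G m as gs \<longleftrightarrow>
     1 \<le> i \<and> i < m \<and> j = i + 1 \<and> y \<in> generate G (as i \<inter> as (i + 1)) \<and> x = gs i \<otimes> y"
  by (auto simp: chain_gen_def)

lemma chain_gen_right_unique:
  assumes "(p, q) \<in> chain_gen G m as gs" and "(p, q') \<in> chain_gen G m as gs"
  shows "q = q'"
proof -
  obtain x i y j y' j' where pq: "p = (x, i)" "q = (y, j)" "q' = (y', j')"
    by (metis surj_pair)
  then have y: "1 \<le> i" "i < m" "j = i + 1" "y \<in> generate G (as i \<inter> as (i + 1))" "x = gs i \<otimes> y"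
    and y': "j' = i + 1" "y' \<in> generate G (as i \<inter> as (i + 1))" "x = gs i \<otimes> y'"
    using assms by (simp_all add: mem_chain_gen_iff)
  have "gs i \<otimes> y = gs i \<otimes> y'" using y(5) y'(3) by simp
  then have "y = y'"
    using generate_in_carrier[OF constituent_carrier gluing_mem[OF y(1,2)]]
      constituent_generate_carrier[OF y(4)] constituent_generate_carrier[OF y'(2)]
    by simp
  then show ?thesis using pq y(3) y'(1) by simp
qed

lemma chain_gen_left_unique:
  "(p, q) \<in> chain_gen G m as gs \<Longrightarrow> (p', q) \<in> chain_gen G m as gs \<Longrightarrow> p = p'"
  by (auto simp: chain_gen_def)

text \<open>Freeness is exactly what forbids two consecutive gluings at one point.\<close>
lemma chain_gen_not_consecutive:
  assumes "(p, q) \<in> chain_gen G m as gs" and "(q, r) \<in> chain_gen G m as gs"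
  shows False
proof -
  obtain i y where pq: "q = (y, i + 1)" "1 \<le> i" "y \<in> generate G (as i \<inter> as (i + 1))"
    using assms(1) by (auto simp: chain_gen_def)
  obtain z where qr: "q = (gs (i + 1) \<otimes> z, i + 1)" "i + 1 < m"
      "z \<in> generate G (as (i + 1) \<inter> as (i + 2))"
    using assms(2) pq(1) by (auto simp: chain_gen_def)
  have "y \<in> gs (i + 1) <# generate G (as (i + 1) \<inter> as (i + 1 + 1))"
    using pq(1) qr(1,3) by (auto simp: mem_l_coset_iff)
  then show False
    using gluing_free[of "i + 1"] pq qr(2) by auto
qed

lemma chain_equiv_cases:
  assumes "(p, q) \<in> chain_equiv G m as gs"
  shows "p = q \<or> (p, q) \<in> chain_gen G m as gs \<or> (q, p) \<in> chain_gen G m as gs"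
proof -
  have "(p, q) \<in> (chain_gen G m as gs \<union> (chain_gen G m as gs)\<inverse>)\<^sup>*"
    using assms by (simp add: chain_equiv_def)
  then show ?thesis
  proof (induction rule: rtrancl_induct)
    case (step q r)
    then show ?case
      using chain_gen_right_unique chain_gen_left_unique chain_gen_not_consecutive by blast
  qed simp
qed

lemma equiv_chain_equiv: "equiv (chain_base G m as) (chain_equiv G m as gs)"
proof -
  let ?r = "(chain_gen G m as gs \<union> (chain_gen G m as gs)\<inverse>)\<^sup>*"
  have "sym ?r" by (rule sym_rtrancl[OF sym_Un_converse])
  then show ?thesis
    unfolding equiv_def chain_equiv_def
    by (auto simp: refl_on_def sym_def trans_def intro: rtrancl_trans)
qed

lemma chain_class_in_vertices: "(x, i) \<in> chain_base G m as \<Longrightarrow> cls x i \<in> chain_vertices G m as gs"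
  by (simp add: chain_class_def chain_vertices_def quotientI)

lemma chain_class_self: "(x, i) \<in> chain_base G m as \<Longrightarrow> (x, i) \<in> cls x i"
  using equiv_class_self[OF equiv_chain_equiv] by (simp add: chain_class_def)

lemma chain_vertex_eq_class: "V \<in> chain_vertices G m as gs \<Longrightarrow> (x, i) \<in> V \<Longrightarrow> V = cls x i"
  unfolding chain_vertices_def chain_class_def
  by (metis equiv_class_eq equiv_chain_equiv quotientE Image_singleton_iff)

lemma chain_class_eq: "((x, i), (y, j)) \<in> chain_equiv G m as gs \<Longrightarrow> cls x i = cls y j"
  unfolding chain_class_def by (rule equiv_class_eq[OF equiv_chain_equiv])

lemma chain_class_glue:
  assumes "1 \<le> i" "i < m" "y \<in> generate G (as i \<inter> as (i + 1))"
  shows "cls (gs i \<otimes> y) i = cls y (i + 1)"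
proof (rule chain_class_eq)
  have "gs i \<otimes> y \<in> generate G (as i)"
    using generate_is_subgroup[OF constituent_carrier] gluing_mem[OF assms(1,2)]
      constituent_generate_mono[OF assms(3)] by (auto intro: subgroup.m_closed)
  moreover have "y \<in> generate G (as (i + 1))"
    using assms(3) mono_generate[of "as i \<inter> as (i + 1)" "as (i + 1)"] by auto
  moreover have "((gs i \<otimes> y, i), (y, i + 1)) \<in> chain_gen G m as gs"
    using assms by (auto simp: chain_gen_def)
  ultimately show "((gs i \<otimes> y, i), (y, i + 1)) \<in> chain_equiv G m as gs"
    using assms by (auto simp: chain_equiv_def chain_base_def)
qed

lemma chain_class_singleton:
  assumes "1 \<le> i" "i \<le> m" "x \<in> generate G (as i)"
    and not_glued_right: "i < m \<Longrightarrow> x \<notin> gs i <# generate G (as i \<inter> as (i + 1))"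
    and not_glued_left: "1 < i \<Longrightarrow> x \<notin> generate G (as (i - 1) \<inter> as i)"
  shows "cls x i = {(x, i)}"
proof -
  have "p = (x, i)" if "p \<in> cls x i" for p
    using chain_equiv_cases[of "(x, i)" p] that not_glued_right not_glued_left
    by (auto simp: chain_class_def chain_gen_def mem_l_coset_iff)
  then show ?thesis using chain_class_self assms(1-3) by (auto simp: chain_base_def)
qed

lemma chain_class_gen_mult:
  assumes "((x, i), (y, j)) \<in> chain_gen G m as gs" "e \<in> as i" "e \<in> as j"
  shows "cls (x \<otimes> e) i = cls (y \<otimes> e) j"
proof -
  obtain z where z: "x = gs i \<otimes> z" "y = z" "j = i + 1" "1 \<le> i" "i < m"
      "z \<in> generate G (as i \<inter> as (i + 1))"
    using assms(1) by (auto simp: chain_gen_def)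
  have ze: "z \<otimes> e \<in> generate G (as i \<inter> as (i + 1))"
    using generate_mult_incl[OF z(6)] assms(2,3) z(3) by simp
  have "x \<otimes> e = gs i \<otimes> (z \<otimes> e)"
    using z(1) generate_in_carrier[OF constituent_carrier gluing_mem[OF z(4,5)]]
      constituent_generate_carrier[OF z(6)] subsetD[OF constituent_carrier assms(2)]
    by (simp add: m_assoc)
  then show ?thesis using chain_class_glue[OF z(4,5) ze] z(2,3) by simp
qed

lemma chain_class_equiv_mult:
  assumes "((x, i), (y, j)) \<in> chain_equiv G m as gs" "e \<in> as i" "e \<in> as j"
  shows "cls (x \<otimes> e) i = cls (y \<otimes> e) j"
  using chain_equiv_cases[OF assms(1)]
proof (elim disjE)
  assume "((x, i), (y, j)) \<in> chain_gen G m as gs"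
  then show ?thesis using chain_class_gen_mult assms(2,3) by blast
next
  assume "((y, j), (x, i)) \<in> chain_gen G m as gs"
  then show ?thesis using chain_class_gen_mult assms(2,3) by (metis sym)
qed simp

lemma chain_edgesE:
  assumes "(U, W) \<in> chain_edges G m as gs e"
  obtains j y where "W \<in> chain_vertices G m as gs" "e \<in> as j" "(y, j) \<in> U" "(y \<otimes> e, j) \<in> W"
  using assms unfolding chain_edges_def by blast

lemma pi_chain_class:
  assumes "1 \<le> i" "i \<le> m" "x \<in> generate G (as i)" "e \<in> as i"
  shows "graph_pi (chain_edges G m as gs e) (cls x i) = cls (x \<otimes> e) i"
proof (rule graph_pi_eqI)
  have "(x, i) \<in> chain_base G m as" "(x \<otimes> e, i) \<in> chain_base G m as"
    using assms generate_mult_incl by (auto simp: chain_base_def)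
  then have "cls x i \<in> chain_vertices G m as gs" "cls (x \<otimes> e) i \<in> chain_vertices G m as gs"
      "(x, i) \<in> cls x i" "(x \<otimes> e, i) \<in> cls (x \<otimes> e) i"
    by (simp_all add: chain_class_in_vertices chain_class_self)
  then show "(cls x i, cls (x \<otimes> e) i) \<in> chain_edges G m as gs e"
    using assms unfolding chain_edges_def by blast
next
  fix W assume "(cls x i, W) \<in> chain_edges G m as gs e"
  then obtain j y where W: "W \<in> chain_vertices G m as gs" "e \<in> as j"
      "(y, j) \<in> cls x i" "(y \<otimes> e, j) \<in> W"
    by (rule chain_edgesE)
  have "((x, i), (y, j)) \<in> chain_equiv G m as gs"
    using W(3) by (simp add: chain_class_def)
  then have "cls (x \<otimes> e) i = cls (y \<otimes> e) j"
    using chain_class_equiv_mult assms(4) W(2) by blast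
  then show "W = cls (x \<otimes> e) i"
    using chain_vertex_eq_class[OF W(1,4)] by simp
qed

lemma pi_chain_class_isolated:
  assumes "cls x i = {(x, i)}" "e \<notin> as i"
  shows "graph_pi (chain_edges G m as gs e) (cls x i) = cls x i"
proof (rule graph_pi_isolated)
  fix W
  show "(cls x i, W) \<notin> chain_edges G m as gs e"
  proof
    assume "(cls x i, W) \<in> chain_edges G m as gs e"
    then obtain j y where "e \<in> as j" "(y, j) \<in> cls x i" by (rule chain_edgesE)
    then show False using assms by auto
  qed
qed

lemma pi_word_chain_class:
  assumes "1 \<le> i" "i \<le> m" "x \<in> generate G (as i)" "set w \<subseteq> as i"
  shows "graph_pi_word (chain_edges G m as gs) w (cls x i) = cls (x \<otimes> word_eval G w) i"
  using assms(3,4)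
proof (induction w arbitrary: x)
  case Nil
  then show ?case using generate_in_carrier[OF constituent_carrier] by simp
next
  case (Cons e w)
  have "e \<in> carrier G" "set w \<subseteq> carrier G"
    using Cons.prems(2) constituent_carrier by auto
  then have "x \<otimes> e \<otimes> word_eval G w = x \<otimes> (e \<otimes> word_eval G w)"
    using generate_in_carrier[OF constituent_carrier Cons.prems(1)] word_eval_closed
    by (simp add: m_assoc)
  then show ?case
    using Cons pi_chain_class[OF assms(1,2)] generate_mult_incl by simp
qed

lemma pi_word_traverse_chain:
  assumes "\<And>i. 1 \<le> i \<Longrightarrow> i < m \<Longrightarrow> set (u i) \<subseteq> as i \<and> word_eval G (u i) = gs i"
    and "1 \<le> j" "j \<le> m"
  shows "graph_pi_word (chain_edges G m as gs) (concat (map u [1..<j])) (cls \<one> 1) = cls \<one> j"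
  using assms(2,3)
proof (induction j rule: dec_induct)
  case (step j)
  then have j: "1 \<le> j" "j < m" by simp_all
  have gs: "gs j \<in> carrier G"
    using generate_in_carrier[OF constituent_carrier gluing_mem[OF j]] .
  have "graph_pi_word (chain_edges G m as gs) (concat (map u [1..<Suc j])) (cls \<one> 1)
      = graph_pi_word (chain_edges G m as gs) (u j) (cls \<one> j)"
    using step by (simp add: graph_pi_word_append)
  also have "\<dots> = cls (gs j) j"
    using pi_word_chain_class[OF j(1) _ generate.one] assms(1)[OF j] j gs by simp
  also have "\<dots> = cls (gs j \<otimes> \<one>) j"
    using gs by simp
  also have "\<dots> = cls \<one> (Suc j)"
    using chain_class_glue[OF j generate.one] by simp
  finally show ?case .
qed simp

lemma coset_region_preserved:
  assumes "1 \<le> i" "i \<le> m" "t \<in> generate G (as i)"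
    and singleton: "\<And>x. x \<in> t <# generate G (as i \<inter> B) \<Longrightarrow> cls x i = {(x, i)}"
    and "set w \<subseteq> B" "v \<in> {cls x i | x. x \<in> t <# generate G (as i \<inter> B)}"
  shows "graph_pi_word (chain_edges G m as gs) w v \<in> {cls x i | x. x \<in> t <# generate G (as i \<inter> B)}"
proof (rule graph_pi_word_preserves[OF _ assms(5,6)])
  fix e v assume e: "e \<in> B" and "v \<in> {cls x i | x. x \<in> t <# generate G (as i \<inter> B)}"
  then obtain z where v: "v = cls (t \<otimes> z) i" and z: "z \<in> generate G (as i \<inter> B)"
    by (auto simp: mem_l_coset_iff)
  have tz: "t \<otimes> z \<in> generate G (as i)"
    using generate_is_subgroup[OF constituent_carrier] assms(3) constituent_generate_mono[OF z]
    by (auto intro: subgroup.m_closed)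
  have isolated: "cls (t \<otimes> z) i = {(t \<otimes> z, i)}"
    using singleton z by (auto simp: mem_l_coset_iff)
  show "graph_pi (chain_edges G m as gs e) v \<in> {cls x i | x. x \<in> t <# generate G (as i \<inter> B)}"
  proof (cases "e \<in> as i")
    case True
    have "t \<otimes> z \<otimes> e = t \<otimes> (z \<otimes> e)"
      using generate_in_carrier[OF constituent_carrier assms(3)] constituent_generate_carrier[OF z]
        subsetD[OF constituent_carrier True] by (simp add: m_assoc)
    moreover have "z \<otimes> e \<in> generate G (as i \<inter> B)"
      using generate_mult_incl[OF z] True e by simp
    ultimately show ?thesis
      using v pi_chain_class[OF assms(1,2) tz True]
      by (auto simp: mem_l_coset_iff)
  next
    case False
    then show ?thesis
      using v z pi_chain_class_isolated[OF isolated]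
      by (auto simp: mem_l_coset_iff)
  qed
qed

end

lemma mod_pred_cyclic: "0 < i \<Longrightarrow> i \<le> k \<Longrightarrow> (i + k - 1) mod k = i - (1 :: nat)"
  using mod_add_self2[of "i - 1" k] by (cases "i = k") simp_all

lemma (in group) amalgamation_chainI:
  assumes "free_chain G \<alpha> m as gs" and "\<And>i. as i \<subseteq> carrier G"
  shows "amalgamation_chain G m as gs"
  using assms is_group
  unfolding free_chain_def amalgamation_chain_def amalgamation_chain_axioms_def by blast

lemma coset_cycle_cong:
  assumes "0 < k" and "\<And>i. i < k \<Longrightarrow> \<beta> i = \<beta>' i"
  shows "coset_cycle G \<alpha> k g \<beta> \<longleftrightarrow> coset_cycle G \<alpha> k g \<beta>'"
  using assms unfolding coset_cycle_def by simp

lemma coset_cycle_restrict_labels: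
  assumes "coset_cycle G \<alpha> k g \<beta>"
  shows "coset_cycle G \<alpha> k g (\<lambda>i. \<beta> i \<inter> \<alpha>)"
proof -
  have "0 < k" and "\<And>i. i < k \<Longrightarrow> \<beta> i \<subseteq> \<alpha>"
    using assms by (auto simp: coset_cycle_def)
  then have "coset_cycle G \<alpha> k g \<beta> \<longleftrightarrow> coset_cycle G \<alpha> k g (\<lambda>i. \<beta> i \<inter> \<alpha>)"
    by (intro coset_cycle_cong) auto
  then show ?thesis using assms by simp
qed

text \<open>The labels are required to lie in \<open>\<alpha>\<close> also outside \<open>{0..<k}\<close>, where the cycle does not
  constrain them; this makes every \<open>\<beta> i\<close> a legitimate constituent of an amalgamation chain.\<close>
locale involutive_coset_cycle = group G for G (structure) +
  fixes \<alpha> :: "'a set" and k :: nat and g :: "nat \<Rightarrow> 'a" and \<beta> :: "nat \<Rightarrow> 'a set"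
  assumes alphabet_carrier: "\<alpha> \<subseteq> carrier G"
    and alphabet_involutions: "e \<in> \<alpha> \<Longrightarrow> e \<otimes> e = \<one>"
    and cycle: "coset_cycle G \<alpha> k g \<beta>"
    and labels_subset: "\<beta> i \<subseteq> \<alpha>"
begin

definition jump :: "nat \<Rightarrow> 'a"
  where "jump i = inv (g (i mod k)) \<otimes> g (Suc i mod k)"

lemma two_le_length: "2 \<le> k"
  using cycle by (simp add: coset_cycle_def)

lemma labels_carrier: "\<beta> i \<subseteq> carrier G"
  using labels_subset alphabet_carrier by blast

lemma cycle_closed_mod: "g (i mod k) \<in> carrier G"
proof -
  have "i mod k < k" using two_le_length by simp
  then have "g (i mod k) \<in> generate G \<alpha>" using cycle by (simp add: coset_cycle_def)
  then show ?thesis using generate_in_carrier[OF alphabet_carrier] by blast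
qed

lemma cycle_closed: "i < k \<Longrightarrow> g i \<in> carrier G"
  using cycle_closed_mod[of i] by simp

lemma jump_closed: "jump i \<in> carrier G"
  using cycle_closed_mod[of i] cycle_closed_mod[of "Suc i"] by (simp add: jump_def)

lemma cycle_Suc: "i < k \<Longrightarrow> g (Suc i mod k) = g i \<otimes> jump i"
  using cycle_closed[of i] cycle_closed_mod[of "Suc i"] by (simp add: jump_def m_assoc[symmetric])

lemma jump_in_generate: "i < k \<Longrightarrow> jump i \<in> generate G (\<beta> i)"
proof -
  assume i: "i < k"
  then have "g (Suc i mod k) \<in> g i <# generate G (\<beta> i)"
    using cycle by (simp add: coset_cycle_def)
  then obtain z where z: "z \<in> generate G (\<beta> i)" "g (Suc i mod k) = g i \<otimes> z"
    by (auto simp: mem_l_coset_iff)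
  have "g i \<otimes> jump i = g i \<otimes> z" using z(2) cycle_Suc[OF i] by simp
  then have "jump i = z"
    using cycle_closed[OF i] jump_closed generate_in_carrier[OF labels_carrier z(1)] by simp
  then show ?thesis using z(1) by simp
qed

text \<open>The disjointness condition of the cycle, translated by \<open>(g i)\<inverse>\<close>.\<close>
lemma jump_cosets_disjoint:
  assumes "i < k"
  shows "generate G (\<beta> i \<inter> \<beta> ((i + k - 1) mod k))
      \<inter> (jump i <# generate G (\<beta> i \<inter> \<beta> (Suc i mod k))) = {}"
proof -
  have False if y: "y \<in> generate G (\<beta> i \<inter> \<beta> ((i + k - 1) mod k))"
    and y': "y \<in> jump i <# generate G (\<beta> i \<inter> \<beta> (Suc i mod k))" for y
  proof -
    obtain z where z: "z \<in> generate G (\<beta> i \<inter> \<beta> (Suc i mod k))" "y = jump i \<otimes> z"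
      using y' by (auto simp: mem_l_coset_iff)
    have "z \<in> carrier G"
      using generate_in_carrier[OF le_infI1[OF labels_carrier] z(1)] .
    then have "g i \<otimes> y = g (Suc i mod k) \<otimes> z"
      using z(2) cycle_Suc[OF assms] cycle_closed[OF assms] jump_closed by (simp add: m_assoc)
    then have "g i \<otimes> y \<in> (g i <# generate G (\<beta> i \<inter> \<beta> ((i + k - 1) mod k)))
        \<inter> (g (Suc i mod k) <# generate G (\<beta> i \<inter> \<beta> (Suc i mod k)))"
      using y z(1) unfolding mem_l_coset_iff Int_iff by metis
    then show False using cycle assms by (auto simp: coset_cycle_def)
  qed
  then show ?thesis by blast
qed

lemma labels_proper: "i < k \<Longrightarrow> \<beta> i \<subset> \<alpha>"
proof (rule ccontr)
  assume i: "i < k" and "\<not> \<beta> i \<subset> \<alpha>"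
  then have full: "\<beta> i = \<alpha>" using labels_subset by blast
  define j where "j = (i + k - 1) mod k"
  have j: "j < k" "Suc j mod k = i"
    using i two_le_length by (auto simp: j_def mod_Suc_eq)
  then have "\<beta> j \<inter> \<beta> (Suc j mod k) = \<beta> j" using full labels_subset by blast
  then have "\<one> \<in> jump j <# generate G (\<beta> j \<inter> \<beta> (Suc j mod k))"
    using jump_in_generate[OF j(1)] jump_closed generate_m_inv_closed[OF labels_carrier]
    by (auto simp: mem_l_coset_iff intro!: bexI[of _ "inv (jump j)"])
  then show False
    using jump_cosets_disjoint[OF j(1)] generate.one by blast
qed

lemma jump_words:
  obtains u where "\<And>i. i < k \<Longrightarrow> set (u i) \<subseteq> \<beta> i \<and> word_eval G (u i) = jump i"
proof -
  have "\<exists>w. set w \<subseteq> \<beta> i \<and> word_eval G w = jump i" if "i < k" for i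
    using generate_involutions_word[OF labels_carrier _ jump_in_generate[OF that]]
      alphabet_involutions labels_subset by blast
  then show ?thesis using that by metis
qed

lemma free_chain_jumps:
  assumes "1 \<le> m" "m < k"
  shows "free_chain G \<alpha> m \<beta> jump"
  unfolding free_chain_def
proof (intro conjI allI impI)
  fix i assume "1 < i \<and> i < m"
  then have i: "i < k" "(i + k - 1) mod k = i - 1" "Suc i mod k = i + 1"
    using assms mod_pred_cyclic[of i k] by auto
  show "generate G (\<beta> (i - 1) \<inter> \<beta> i) \<inter> (jump i <# generate G (\<beta> i \<inter> \<beta> (i + 1))) = {}"
    using jump_cosets_disjoint[OF i(1)] i(2,3) by (simp add: Int_commute)
qed (use assms labels_proper jump_in_generate in auto)

end

locale coset_cycle_chain = involutive_coset_cycle +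
  fixes m :: nat and u :: "nat \<Rightarrow> 'a list"
  assumes chain_length: "1 \<le> m" "m < k" "k \<le> m + 2"
    and jump_word: "i < k \<Longrightarrow> set (u i) \<subseteq> \<beta> i \<and> word_eval G (u i) = jump i"
begin

sublocale amalgamation_chain G m \<beta> jump
  by (rule amalgamation_chainI[OF free_chain_jumps[OF chain_length(1,2)] labels_carrier])

abbreviation first_region :: "('a \<times> nat) set set"
  where "first_region \<equiv> {cls x 1 | x. x \<in> generate G (\<beta> 1 \<inter> \<beta> 0)}"

abbreviation last_region :: "('a \<times> nat) set set"
  where "last_region \<equiv> {cls x m | x. x \<in> jump m <# generate G (\<beta> m \<inter> \<beta> (Suc m mod k))}"

lemma closing_word_eval: "word_eval G (concat (map u [1..<k]) @ u 0) = \<one>"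
proof -
  have u_carrier: "i < k \<Longrightarrow> set (u i) \<subseteq> carrier G" for i
    using jump_word labels_carrier by blast
  have "word_eval G (concat (map u [1..<k])) = inv (g (1 mod k)) \<otimes> g (k mod k)"
    using two_le_length cycle_closed_mod jump_word u_carrier
    by (intro word_eval_concat_telescope) (auto simp: jump_def)
  moreover have "word_eval G (u 0) = inv (g 0) \<otimes> g 1"
    using jump_word[of 0] two_le_length by (simp add: jump_def)
  moreover have "\<forall>i\<in>{1..<k}. set (u i) \<subseteq> carrier G"
    using u_carrier by simp
  then have "set (concat (map u [1..<k])) \<subseteq> carrier G" by auto
  ultimately show ?thesis
    using two_le_length u_carrier[of 0] cycle_closed[of 0] cycle_closed[of 1]
    by (simp add: word_eval_append m_assoc[symmetric]) (simp add: m_assoc)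
qed

lemma first_region_singleton:
  assumes "x \<in> generate G (\<beta> 1 \<inter> \<beta> 0)"
  shows "cls x 1 = {(x, 1)}"
proof (rule chain_class_singleton)
  show "x \<in> generate G (\<beta> 1)" using constituent_generate_mono[OF assms] .
  assume "1 < m"
  then have "(1 + k - 1) mod k = 0" "Suc 1 mod k = 1 + 1" using chain_length by auto
  then have "generate G (\<beta> 1 \<inter> \<beta> 0) \<inter> (jump 1 <# generate G (\<beta> 1 \<inter> \<beta> (1 + 1))) = {}"
    using jump_cosets_disjoint[of 1] two_le_length by (simp only:)
  then show "x \<notin> jump 1 <# generate G (\<beta> 1 \<inter> \<beta> (1 + 1))"
    using assms by blast
qed (use chain_length in auto)

lemma last_coset_in_constituent:
  assumes "x \<in> jump m <# generate G (\<beta> m \<inter> \<beta> (Suc m mod k))"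
  shows "x \<in> generate G (\<beta> m)"
proof -
  obtain z where "z \<in> generate G (\<beta> m \<inter> \<beta> (Suc m mod k))" "x = jump m \<otimes> z"
    using assms by (auto simp: mem_l_coset_iff)
  then show ?thesis
    using jump_in_generate[OF chain_length(2)] constituent_generate_mono
    by (auto intro: generate.eng)
qed

lemma last_region_singleton:
  assumes "x \<in> jump m <# generate G (\<beta> m \<inter> \<beta> (Suc m mod k))"
  shows "cls x m = {(x, m)}"
proof (rule chain_class_singleton)
  show "x \<in> generate G (\<beta> m)" using last_coset_in_constituent[OF assms] .
  assume "1 < m"
  then show "x \<notin> generate G (\<beta> (m - 1) \<inter> \<beta> m)"
    using jump_cosets_disjoint[OF chain_length(2)] assms mod_pred_cyclic[of m k] chain_length
    by (auto simp: Int_commute)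
qed (use chain_length in auto)

lemma walk_reaches_last_region:
  "graph_pi_word (chain_edges G m \<beta> jump) (concat (map u [1..<k])) (cls \<one> 1) \<in> last_region"
proof -
  have "[1..<k] = [1..<m] @ [m..<k]"
    using upt_add_eq_append[of 1 m "k - m"] chain_length by simp
  also have "[m..<k] = m # [Suc m..<k]"
    using upt_conv_Cons chain_length by simp
  finally have "[1..<k] = [1..<m] @ m # [Suc m..<k]" .
  then have word_split: "concat (map u [1..<k]) = concat (map u [1..<m]) @ u m @ concat (map u [Suc m..<k])"
    by simp
  let ?R = "chain_edges G m \<beta> jump"
  have first_part: "graph_pi_word ?R (concat (map u [1..<m])) (cls \<one> 1) = cls \<one> m"
    using pi_word_traverse_chain[of u m] jump_word chain_length by simp
  have middle_part: "graph_pi_word ?R (u m) (cls \<one> m) = cls (jump m) m"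
    using pi_word_chain_class[OF chain_length(1) order.refl generate.one] jump_word[OF chain_length(2)]
      jump_closed by simp
  have "jump m \<in> jump m <# generate G (\<beta> m \<inter> \<beta> (Suc m mod k))"
    using jump_closed generate.one by (auto simp: mem_l_coset_iff intro!: bexI[of _ \<one>])
  then have start: "cls (jump m) m \<in> last_region" by blast
  have last_part: "set (concat (map u [Suc m..<k])) \<subseteq> \<beta> (Suc m mod k)"
  proof (cases "k = Suc m")
    case False
    then have k: "k = Suc (Suc m)" using chain_length by simp
    then show ?thesis using jump_word[of "Suc m"] by simp
  qed simp
  have "graph_pi_word ?R (concat (map u [1..<k])) (cls \<one> 1)
      = graph_pi_word ?R (concat (map u [Suc m..<k])) (cls (jump m) m)"
    unfolding word_split graph_pi_word_append first_part middle_part ..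
  also have "\<dots> \<in> last_region"
    by (rule coset_region_preserved[OF chain_length(1) order.refl jump_in_generate[OF chain_length(2)]
          last_region_singleton last_part start])
  finally show ?thesis .
qed

text \<open>Since the letters are involutions, \<open>u 0 @ rev (u 0)\<close> evaluates to \<open>\<one>\<close>, so compatibility lets
  us undo \<open>u 0\<close> by reading it backwards.\<close>
lemma first_region_contains_preimage:
  assumes compatible: "\<And>w v. set w \<subseteq> \<alpha> \<Longrightarrow> word_eval G w = \<one> \<Longrightarrow> v \<in> chain_vertices G m \<beta> jump \<Longrightarrow>
      graph_pi_word (chain_edges G m \<beta> jump) w v = v"
    and "t \<in> chain_vertices G m \<beta> jump"
    and "graph_pi_word (chain_edges G m \<beta> jump) (u 0) t = cls \<one> 1"
  shows "t \<in> first_region"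
proof -
  have u0: "set (u 0) \<subseteq> \<beta> 0" using jump_word two_le_length by simp
  moreover have "\<And>e. e \<in> set (u 0) \<Longrightarrow> e \<otimes> e = \<one>"
    using u0 labels_subset alphabet_involutions by blast
  ultimately have "word_eval G (u 0 @ rev (u 0)) = \<one>"
    using labels_carrier by (intro word_eval_append_rev) auto
  then have "t = graph_pi_word (chain_edges G m \<beta> jump) (rev (u 0)) (cls \<one> 1)"
    using compatible[of "u 0 @ rev (u 0)" t] assms(2,3) u0 labels_subset
    by (auto simp: graph_pi_word_append)
  moreover have "generate G (\<beta> 1 \<inter> \<beta> 0) \<subseteq> carrier G"
    using generate_incl le_infI1[OF labels_carrier] by blast
  moreover have "cls \<one> 1 \<in> {cls x 1 | x. x \<in> \<one> <# generate G (\<beta> 1 \<inter> \<beta> 0)}"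
    using generate.one lcos_mult_one calculation(2) by blast
  ultimately show ?thesis
    using coset_region_preserved[OF order.refl _ generate.one, of "\<beta> 0" "rev (u 0)"]
      first_region_singleton chain_length u0 lcos_mult_one by simp
qed

text \<open>Only a class of a point of the first constituent can lie in the first region, so the two
  regions can only meet if \<open>m = 1\<close>, where the disjointness condition at index 1 separates them.\<close>
lemma regions_disjoint: "first_region \<inter> last_region = {}"
proof -
  have False if x: "x \<in> generate G (\<beta> 1 \<inter> \<beta> 0)"
    and y: "y \<in> jump m <# generate G (\<beta> m \<inter> \<beta> (Suc m mod k))" and eq: "cls x 1 = cls y m" for x y
  proof -
    have "(y, m) \<in> cls y m"
      using chain_class_self last_region_singleton[OF y] by simp
    then have "m = 1" "y = x" using eq first_region_singleton[OF x] by auto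
    then show False
      using jump_cosets_disjoint[of 1] x y two_le_length by (auto simp: Int_commute)
  qed
  then show ?thesis by blast
qed

lemma not_compatible:
  assumes "\<And>w v. set w \<subseteq> \<alpha> \<Longrightarrow> word_eval G w = \<one> \<Longrightarrow> v \<in> chain_vertices G m \<beta> jump \<Longrightarrow>
      graph_pi_word (chain_edges G m \<beta> jump) w v = v"
  shows False
proof -
  let ?t = "graph_pi_word (chain_edges G m \<beta> jump) (concat (map u [1..<k])) (cls \<one> 1)"
  have t: "?t \<in> last_region" by (rule walk_reaches_last_region)
  have "set (concat (map u [1..<k]) @ u 0) \<subseteq> \<alpha>"
    using jump_word labels_subset two_le_length by fastforce
  moreover have "cls \<one> 1 \<in> chain_vertices G m \<beta> jump"
    using chain_length by (intro chain_class_in_vertices) (simp add: chain_base_def generate.one)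
  ultimately have "graph_pi_word (chain_edges G m \<beta> jump) (concat (map u [1..<k]) @ u 0) (cls \<one> 1)
      = cls \<one> 1"
    using assms closing_word_eval by blast
  then have "graph_pi_word (chain_edges G m \<beta> jump) (u 0) ?t = cls \<one> 1"
    by (simp add: graph_pi_word_append)
  moreover obtain x where "?t = cls x m" "x \<in> jump m <# generate G (\<beta> m \<inter> \<beta> (Suc m mod k))"
    using t by blast
  then have "?t \<in> chain_vertices G m \<beta> jump"
    using last_coset_in_constituent chain_length
    by (simp add: chain_class_in_vertices chain_base_def)
  ultimately have "?t \<in> first_region"
    using first_region_contains_preimage[OF assms] by blast
  then show False using t regions_disjoint by blast
qed

end

theorem mainTheorem8:
  fixes G :: "('a, 'b) monoid_scheme" and E \<alpha> :: "'a set" and n :: nat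
  assumes "E_group G E"
    and "\<alpha> \<subseteq> E"
    and "1 \<le> n"
    and compat: "\<And>m as gs w v. 1 \<le> m \<Longrightarrow> m \<le> n \<Longrightarrow> free_chain G \<alpha> m as gs \<Longrightarrow>
             set w \<subseteq> \<alpha> \<Longrightarrow> word_eval G w = \<one>\<^bsub>G\<^esub> \<Longrightarrow> v \<in> chain_vertices G m as gs \<Longrightarrow>
             graph_pi_word (chain_edges G m as gs) w v = v"
  shows "N_acyclic G \<alpha> (n + 2)"
  unfolding N_acyclic_def
proof
  assume "\<exists>k g \<beta>. 2 \<le> k \<and> k \<le> n + 2 \<and> coset_cycle G \<alpha> k g \<beta>"
  then obtain k g \<beta> where k: "k \<le> n + 2" and cycle: "coset_cycle G \<alpha> k g \<beta>"
    by blast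
  have "group G" and "\<alpha> \<subseteq> carrier G" and "\<And>e. e \<in> \<alpha> \<Longrightarrow> e \<otimes>\<^bsub>G\<^esub> e = \<one>\<^bsub>G\<^esub>"
    using assms(1,2) unfolding E_group_def by auto
  then interpret involutive_coset_cycle G \<alpha> k g "\<lambda>i. \<beta> i \<inter> \<alpha>"
    using coset_cycle_restrict_labels[OF cycle]
    by (intro involutive_coset_cycle.intro involutive_coset_cycle_axioms.intro) auto
  obtain u where u: "\<And>i. i < k \<Longrightarrow> set (u i) \<subseteq> \<beta> i \<inter> \<alpha> \<and> word_eval G (u i) = jump i"
    using jump_words by blast
  define m where "m = max 1 (k - 2)"
  have "1 \<le> m" "m < k" "k \<le> m + 2"
    using two_le_length by (auto simp: m_def)
  then interpret coset_cycle_chain G \<alpha> k g "\<lambda>i. \<beta> i \<inter> \<alpha>" m u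
    using u by unfold_locales auto
  have "m \<le> n" using k assms(3) by (simp add: m_def)
  show False
    by (rule not_compatible, rule compat[OF chain_length(1) \<open>m \<le> n\<close> free_chain_jumps[OF chain_length(1,2)]])
qed

end
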